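(* Let $p,q$ be positive integers with $p/q\ge4$, $k=\lfloor p/q\rfloor$, $r=p-kq\ge1$, and let $G'$ be the graph constructed from a graph $G$ as in the context. Let $h$ and $h'$ be $k$-colourings of $G$ which differ on exactly one vertex $u$, and let $\eta$ be a $(p,q)$-colouring of $G'$ such that $\eta(y_i)=i$ for all $i$, the restriction of $\eta$ to $V(G)$ is $\gamma\circ h$, and every path $P_{ab}$ has the standard path colouring with respect to $\eta$. Then there exists a $(p,q)$-colouring $\eta'$ of $G'$ such that every path $P_{ab}$ has the standard path colouring with respect to $\eta'$, the restriction of $\eta'$ to $V(G)$ is $\gamma\circ h'$, and $\eta$ reconfigures to $\eta'$.
   Context: Intervals $[a,b]=\{a,a+1,\dots,b\}$ are taken modulo $p$. A $(p,q)$-colouring is a map to $\{0,\dots,p-1\}$ with $q\le|\psi(x)-\psi(y)|\le p-q$ on every edge; a $k$-colouring is a proper colouring with colours $\{0,\dots,k-1\}$; $\eta$ reconfigures to $\eta'$ if there is a sequence of $(p,q)$-colourings of $G'$ from $\eta$ to $\eta'$, consecutive ones differing on at most one vertex. Let $t$ be the smallest positive integer with $(t+1)q\equiv r\pmod p$, and $\gamma(0)=0$, $\gamma(i)=iq+r$ for $1\le i\le k-1$. $G'$ is obtained from $G$ by adding a disjoint copy of the circular clique on $y_0,\dots,y_{p-1}$ ($y_iy_j$ an edge iff $q\le|i-j|\le p-q$), and for every edge $uv$ of $G$ two new paths $P_{uv}=u\,x_0^{uv}\cdots x_t^{uv}\,v$ and $P_{vu}=v\,x_0^{vu}\cdots x_t^{vu}\,u$,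 internally disjoint from everything else and each other, where $x_0^{ab},x_t^{ab}$ are joined to all $y_j$ with $j\in[3q-1,p-q-1]$ and $x_i^{ab}$ ($1\le i\le t-1$) to all $y_j$ with $j\in[(i+3)q-1,(i-1)q]$. A path $P_{ab}$ has the standard path colouring with respect to a colouring $\eta$ (whose values on $V(G)$ lie in $\{\gamma(0),\dots,\gamma(k-1)\}$) if: when $\eta(a)=0$, $\eta(x_i^{ab})=(i+1)q\bmod p$ for $0\le i\le t$; when $\eta(b)=0$, $\eta(x_i^{ab})=iq\bmod p$ for $0\le i\le t-1$ and $\eta(x_t^{ab})=q$; when $\eta(a)\ne0\ne\eta(b)$, $\eta(x_i^{ab})=iq\bmod p$ for $0\le i\le t-1$ and $\eta(x_t^{ab})=0$. *)

theory Defs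
  imports Main
begin

definition kpar :: "nat \<Rightarrow> nat \<Rightarrow> nat" where "kpar p q = p div q"
definition rpar :: "nat \<Rightarrow> nat \<Rightarrow> nat" where "rpar p q = p - kpar p q * q"

definition tpar :: "nat \<Rightarrow> nat \<Rightarrow> nat" where
  "tpar p q = (LEAST t. 0 < t \<and> ((t + 1) * q) mod p = rpar p q mod p)"

definition gam :: "nat \<Rightarrow> nat \<Rightarrow> nat \<Rightarrow> nat" where
  "gam p q i = (if i = 0 then 0 else i * q + rpar p q)"

text \<open>Cyclic interval [a,b] = {a, a+1, ..., b} taken modulo p.\<close>
definition cint :: "nat \<Rightarrow> int \<Rightarrow> int \<Rightarrow> nat set" where
  "cint p a b = {nat ((a + j) mod int p) | j. 0 \<le> j \<and> j \<le> (b - a) mod int p}"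

text \<open>Vertices of G': original vertices, clique vertices y_i, path vertices x_i^{ab}.\<close>
datatype 'v gvert = Orig 'v | Yv nat | Xv 'v 'v nat

definition Gvert :: "nat \<Rightarrow> nat \<Rightarrow> 'v set \<Rightarrow> ('v \<times> 'v) set \<Rightarrow> 'v gvert set" where
  "Gvert p q V E = Orig ` V \<union> Yv ` {0..<p} \<union> {Xv a b i | a b i. (a, b) \<in> E \<and> i \<le> tpar p q}"

definition Garc :: "nat \<Rightarrow> nat \<Rightarrow> 'v set \<Rightarrow> ('v \<times> 'v) set \<Rightarrow> 'v gvert \<Rightarrow> 'v gvert \<Rightarrow> bool" where
  "Garc p q V E x y \<longleftrightarrow>
     (\<exists>u v. x = Orig u \<and> y = Orig v \<and> (u, v) \<in> E)
   \<or> (\<exists>i j. x = Yv i \<and> y = Yv j \<and> i < p \<and> j < p \<and>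
        int q \<le> \<bar>int i - int j\<bar> \<and> \<bar>int i - int j\<bar> \<le> int p - int q)
   \<or> (\<exists>a b. (a, b) \<in> E \<and> x = Orig a \<and> y = Xv a b 0)
   \<or> (\<exists>a b i. (a, b) \<in> E \<and> i < tpar p q \<and> x = Xv a b i \<and> y = Xv a b (Suc i))
   \<or> (\<exists>a b. (a, b) \<in> E \<and> x = Xv a b (tpar p q) \<and> y = Orig b)
   \<or> (\<exists>a b j. (a, b) \<in> E \<and> (x = Xv a b 0 \<or> x = Xv a b (tpar p q)) \<and> y = Yv j \<and>
        j \<in> cint p (3 * int q - 1) (int p - int q - 1))
   \<or> (\<exists>a b i j. (a, b) \<in> E \<and> 1 \<le> i \<and> i \<le> tpar p q - 1 \<and> x = Xv a b i \<and> y = Yv j \<and>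
        j \<in> cint p ((int i + 3) * int q - 1) ((int i - 1) * int q))"

definition Gadj :: "nat \<Rightarrow> nat \<Rightarrow> 'v set \<Rightarrow> ('v \<times> 'v) set \<Rightarrow> 'v gvert \<Rightarrow> 'v gvert \<Rightarrow> bool" where
  "Gadj p q V E x y \<longleftrightarrow> Garc p q V E x y \<or> Garc p q V E y x"

definition pq_col :: "nat \<Rightarrow> nat \<Rightarrow> 'v set \<Rightarrow> ('v \<times> 'v) set \<Rightarrow> ('v gvert \<Rightarrow> nat) \<Rightarrow> bool" where
  "pq_col p q V E c \<longleftrightarrow>
     (\<forall>x \<in> Gvert p q V E. c x < p) \<and>
     (\<forall>x \<in> Gvert p q V E. \<forall>y \<in> Gvert p q V E. Gadj p q V E x y \<longrightarrow>
        int q \<le> \<bar>int (c x) - int (c y)\<bar> \<and> \<bar>int (c x) - int (c y)\<bar> \<le> int p - int q)"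

definition k_col :: "nat \<Rightarrow> 'v set \<Rightarrow> ('v \<times> 'v) set \<Rightarrow> ('v \<Rightarrow> nat) \<Rightarrow> bool" where
  "k_col k V E h \<longleftrightarrow> (\<forall>v \<in> V. h v < k) \<and> (\<forall>(u, v) \<in> E. h u \<noteq> h v)"

definition std_path :: "nat \<Rightarrow> nat \<Rightarrow> ('v gvert \<Rightarrow> nat) \<Rightarrow> 'v \<Rightarrow> 'v \<Rightarrow> bool" where
  "std_path p q c a b \<longleftrightarrow>
     (c (Orig a) = 0 \<longrightarrow> (\<forall>i \<le> tpar p q. c (Xv a b i) = ((i + 1) * q) mod p)) \<and>
     (c (Orig b) = 0 \<longrightarrow> (\<forall>i < tpar p q. c (Xv a b i) = (i * q) mod p) \<and> c (Xv a b (tpar p q)) = q) \<and>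
     (c (Orig a) \<noteq> 0 \<and> c (Orig b) \<noteq> 0 \<longrightarrow>
        (\<forall>i < tpar p q. c (Xv a b i) = (i * q) mod p) \<and> c (Xv a b (tpar p q)) = 0)"

definition all_std :: "nat \<Rightarrow> nat \<Rightarrow> ('v \<times> 'v) set \<Rightarrow> ('v gvert \<Rightarrow> nat) \<Rightarrow> bool" where
  "all_std p q E c \<longleftrightarrow> (\<forall>(a, b) \<in> E. std_path p q c a b)"

definition reconf :: "nat \<Rightarrow> nat \<Rightarrow> 'v set \<Rightarrow> ('v \<times> 'v) set \<Rightarrow> ('v gvert \<Rightarrow> nat) \<Rightarrow> ('v gvert \<Rightarrow> nat) \<Rightarrow> bool" where
  "reconf p q V E c c' \<longleftrightarrow>
     (\<exists>cs. cs \<noteq> [] \<and> hd cs = c \<and> last cs = c' \<and> (\<forall>d \<in> set cs. pq_col p q V E d) \<and>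
        (\<forall>i. Suc i < length cs \<longrightarrow>
           card {x \<in> Gvert p q V E. (cs ! i) x \<noteq> (cs ! Suc i) x} \<le> 1))"

end

theory Submission
  imports Defs "HOL-Number_Theory.Cong"
begin

text \<open>Write the colours of a path \<open>x\<^sub>0 \<dots> x\<^sub>t\<close> of \<open>G'\<close> as \<open>x\<^sub>i \<equiv> i q + e\<^sub>i (mod p)\<close>.
  All constraints on the path (its edges and its neighbours in the clique) then say that the
  offsets \<open>e\<^sub>i\<close> grow by at most \<open>p - 2q\<close> per step and stay in a window of width \<open>2q\<close>.
  Two offset sequences can therefore be interpolated by recolouring \<open>x\<^sub>0, \<dots>, x\<^sub>t\<close> in turn,
  as long as the mixed sequences obey the same bounds; this yields every move of a path needed.

  The standard path colourings only see which ends have colour \<open>0\<close>. Hence if \<open>h u \<noteq> 0 \<noteq> h' u\<close>,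
  recolouring \<open>u\<close> is a single step, and by reversing the sequence we may assume \<open>h u = 0\<close>.
  Then the paths at \<open>u\<close> are moved to their standard colourings for \<open>\<gamma> (h' u)\<close>, before or after
  \<open>u\<close> itself is recoloured; for \<open>h' u = 1\<close> this needs a detour of \<open>u\<close> through the colour
  \<open>q - 1\<close>. Finally \<open>\<eta>\<close> coincides with the standard colouring of \<open>h\<close>.\<close>

locale pq_gadget =
  fixes p q :: nat and V :: "'v set" and E :: "('v \<times> 'v) set"
  assumes q_pos: "0 < q" and four_q_le_p: "4 * q \<le> p" and r_pos: "1 \<le> rpar p q"
    and finite_V: "finite V" and E_subset: "E \<subseteq> V \<times> V" and sym_E: "sym E"
    and irrefl_E: "irrefl E"
begin

abbreviation "k \<equiv> kpar p q"
abbreviation "r \<equiv> rpar p q"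
abbreviation "t \<equiv> tpar p q"
abbreviation "\<gamma> \<equiv> gam p q"

lemma r_lt_q: "r < q"
proof -
  have "r = p mod q"
    unfolding rpar_def kpar_def by (metis minus_div_mult_eq_mod)
  thus ?thesis using q_pos by simp
qed

lemma p_eq: "p = k * q + r"
  unfolding rpar_def kpar_def using div_times_less_eq_dividend[of p q] by simp

lemma four_le_k: "4 \<le> k"
proof -
  have "4 * q div q \<le> p div q" using four_q_le_p div_le_mono by blast
  thus ?thesis using q_pos unfolding kpar_def by simp
qed

lemma four_q_lt_p: "4 * q < p"
proof -
  have "4 * q \<le> k * q" using four_le_k mult_le_mono1 by blast
  thus ?thesis using p_eq r_pos by linarith
qed

text \<open>The least \<open>t\<close> exists because \<open>(p - k) q = p q - k q \<equiv> r\<close>.\<close>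

lemma t_spec: "0 < t" "((t + 1) * q) mod p = r mod p"
proof -
  define w where "w = p - k - 1"
  have kq: "k * q < p" using p_eq r_pos by simp
  have "k * 2 \<le> k * q" using r_lt_q r_pos by simp
  hence kp: "k + 1 < p" using p_eq four_le_k q_pos r_pos four_q_lt_p by linarith
  obtain q' where q': "q = Suc q'" using q_pos by (cases q) auto
  have "w + 1 = p - k" using kp unfolding w_def by simp
  hence "(w + 1) * q = p * q - k * q" by (simp add: diff_mult_distrib)
  also have "\<dots> = (p * q' + p) - k * q" unfolding q' by simp
  also have "\<dots> = p * q' + (p - k * q)"
    using Nat.add_diff_assoc[OF less_imp_le[OF kq], of "p * q'"] by simp
  finally have "((w + 1) * q) mod p = r mod p" unfolding rpar_def by simp
  moreover have "0 < w" using kp unfolding w_def by simp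
  ultimately have "0 < w \<and> ((w + 1) * q) mod p = r mod p" by simp
  hence "0 < t \<and> ((t + 1) * q) mod p = r mod p" unfolding tpar_def by (rule LeastI)
  thus "0 < t" "((t + 1) * q) mod p = r mod p" by simp_all
qed

lemma two_le_t: "2 \<le> t"
proof (rule ccontr)
  assume "\<not> 2 \<le> t"
  hence "t = 1" using t_spec by simp
  hence "(2 * q) mod p = r" using t_spec r_lt_q four_q_lt_p by simp
  moreover have "(2 * q) mod p = 2 * q" using four_q_lt_p by simp
  ultimately show False using r_lt_q by simp
qed

text \<open>Converts between the two descriptions of the colour of \<open>x\<^sub>t\<close>: as \<open>t q + e\<close> along the
  path and as a small number seen from the clique.\<close>

lemma cong_by_tq:
  assumes "x - y = (int t * int q + int q - int r) * a + int p * b"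
  shows "[x = y] (mod int p)"
proof -
  have "int (((t + 1) * q) mod p) = int (r mod p)" using t_spec(2) by simp
  hence "[int t * int q + int q = int r] (mod int p)"
    unfolding cong_def by (simp add: zmod_int algebra_simps)
  hence "int p dvd x - y" unfolding assms by (simp add: cong_iff_dvd_diff)
  thus ?thesis by (simp add: cong_iff_dvd_diff)
qed

section \<open>Distance of colours\<close>

definition far :: "nat \<Rightarrow> nat \<Rightarrow> bool" where
  "far a b \<longleftrightarrow> int q \<le> \<bar>int a - int b\<bar> \<and> \<bar>int a - int b\<bar> \<le> int p - int q"

lemma far_sym: "far a b \<longleftrightarrow> far b a"
  unfolding far_def by linarith

lemma farI: "a < p \<Longrightarrow> b + q \<le> a \<Longrightarrow> a \<le> b + (p - q) \<Longrightarrow> far a b"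
  unfolding far_def by auto

lemma far_if_cong:
  assumes "a < p" "b < p" "[int a = x] (mod int p)" "[int b = y] (mod int p)"
    and "[x - y = z] (mod int p)" "int q \<le> z" "z \<le> int p - int q"
  shows "far a b"
proof -
  have "[int a - int b = z] (mod int p)"
    using cong_trans[OF cong_diff[OF assms(3,4)] assms(5)] .
  hence "(int a - int b) mod int p = z"
    using assms(6,7) q_pos unfolding cong_def by simp
  then obtain m where m: "int a - int b = z + int p * m"
    by (metis mod_div_mult_eq mult.commute)
  have "m = 0 \<or> m = -1"
  proof -
    have p_pos: "0 < int p" using four_q_lt_p by simp
    have "int p * m < int p" using m assms by linarith
    hence "m < 1" using p_pos by (metis mult.right_neutral mult_less_cancel_left_pos)
    moreover have "int p * m > - 2 * int p" using m assms q_pos by linarith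
    hence "m > -2" using p_pos by (metis mult.commute mult_less_cancel_left_pos)
    ultimately show ?thesis by linarith
  qed
  thus ?thesis using m assms unfolding far_def by auto
qed

definition far_from_end_clique :: "nat \<Rightarrow> bool" where
  "far_from_end_clique c \<longleftrightarrow> (\<forall>j \<in> cint p (3 * int q - 1) (int p - int q - 1). far c j)"

definition far_from_inner_clique :: "nat \<Rightarrow> nat \<Rightarrow> bool" where
  "far_from_inner_clique i c \<longleftrightarrow>
     (\<forall>j \<in> cint p ((int i + 3) * int q - 1) ((int i - 1) * int q). far c j)"

lemma cint_elim:
  assumes "j \<in> cint p a b"
  obtains m where "0 \<le> m" "m \<le> (b - a) mod int p" "[int j = a + m] (mod int p)" "j < p"
proof -
  from assms obtain m where m: "j = nat ((a + m) mod int p)" "0 \<le> m" "m \<le> (b - a) mod int p"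
    unfolding cint_def by blast
  have "int j = (a + m) mod int p" using m(1) four_q_lt_p by simp
  moreover have "j < p" using m(1) four_q_lt_p by (simp add: nat_less_iff)
  ultimately show ?thesis using that m unfolding cong_def by simp
qed

lemma far_from_inner_clique_if_cong:
  assumes "c < p" "[int c = int i * int q + e] (mod int p)" "0 \<le> e" "e \<le> 2 * int q - 1"
  shows "far_from_inner_clique i c"
  unfolding far_from_inner_clique_def
proof
  fix j assume "j \<in> cint p ((int i + 3) * int q - 1) ((int i - 1) * int q)"
  then obtain m where m: "0 \<le> m" "m \<le> ((int i - 1) * int q - ((int i + 3) * int q - 1)) mod int p"
    "[int j = (int i + 3) * int q - 1 + m] (mod int p)" "j < p" by (rule cint_elim)
  have "(int i - 1) * int q - ((int i + 3) * int q - 1) = (1 - 4 * int q + int p) - int p"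
    by (simp add: algebra_simps)
  hence "((int i - 1) * int q - ((int i + 3) * int q - 1)) mod int p
      = (1 - 4 * int q + int p) mod int p" by (metis minus_mod_self2)
  also have "\<dots> = 1 - 4 * int q + int p" using four_q_lt_p q_pos by (intro mod_pos_pos_trivial) auto
  finally have "m \<le> 1 - 4 * int q + int p" using m(2) by simp
  then show "far c j"
    using assms m by (intro far_if_cong[OF assms(1) m(4) assms(2) m(3),
        where z = "e - 3 * int q + 1 - m + int p"]) (auto simp: cong_iff_dvd_diff algebra_simps)
qed

lemma far_from_end_clique_if_cong:
  assumes "c < p" "[int c = d] (mod int p)" "-1 \<le> d" "d \<le> 2 * int q - 1"
  shows "far_from_end_clique c"
  unfolding far_from_end_clique_def
proof
  fix j assume "j \<in> cint p (3 * int q - 1) (int p - int q - 1)"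
  then obtain m where m: "0 \<le> m" "m \<le> ((int p - int q - 1) - (3 * int q - 1)) mod int p"
    "[int j = 3 * int q - 1 + m] (mod int p)" "j < p" by (rule cint_elim)
  have "((int p - int q - 1) - (3 * int q - 1)) mod int p = (int p - 4 * int q) mod int p"
    by (simp add: algebra_simps)
  also have "\<dots> = int p - 4 * int q" using four_q_lt_p q_pos by (intro mod_pos_pos_trivial) auto
  finally have "((int p - int q - 1) - (3 * int q - 1)) mod int p = int p - 4 * int q" .
  hence "m \<le> int p - 4 * int q" using m(2) by simp
  thus "far c j"
    using assms m by (intro far_if_cong[OF assms(1) m(4) assms(2) m(3),
        where z = "d - 3 * int q + 1 - m + int p"]) (auto simp: cong_iff_dvd_diff)
qed

section \<open>Colourings of a single path\<close>

definition path_ok :: "nat \<Rightarrow> nat \<Rightarrow> (nat \<Rightarrow> nat) \<Rightarrow> bool" where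
  "path_ok A B f \<longleftrightarrow> (\<forall>i\<le>t. f i < p) \<and> far A (f 0) \<and> far (f t) B \<and>
     (\<forall>i<t. far (f i) (f (Suc i))) \<and> far_from_end_clique (f 0) \<and> far_from_end_clique (f t) \<and>
     (\<forall>i. 1 \<le> i \<and> i \<le> t - 1 \<longrightarrow> far_from_inner_clique i (f i))"

text \<open>The bounds on \<open>e\<close> are what the path edges and the clique require; at \<open>x\<^sub>t\<close> the clique
  constraint is stated for a second representative \<open>d\<close> of the colour, since \<open>t q \<equiv> r - q\<close>.\<close>

definition has_offsets :: "(nat \<Rightarrow> nat) \<Rightarrow> (nat \<Rightarrow> int) \<Rightarrow> int \<Rightarrow> bool" where
  "has_offsets f e d \<longleftrightarrow>
     (\<forall>i\<le>t. f i < p \<and> [int (f i) = int i * int q + e i] (mod int p)) \<and>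
     (\<forall>i<t. 0 \<le> e (Suc i) - e i \<and> e (Suc i) - e i \<le> int p - 2 * int q) \<and>
     (\<forall>i. 1 \<le> i \<and> i \<le> t - 1 \<longrightarrow> 0 \<le> e i \<and> e i \<le> 2 * int q - 1) \<and>
     -1 \<le> e 0 \<and> e 0 \<le> 2 * int q - 1 \<and>
     [int (f t) = d] (mod int p) \<and> -1 \<le> d \<and> d \<le> 2 * int q - 1"

lemma path_ok_if_offsets:
  assumes "has_offsets f e d" "far A (f 0)" "far (f t) B"
  shows "path_ok A B f"
  unfolding path_ok_def
proof (intro conjI allI impI)
  note off = assms(1)[unfolded has_offsets_def]
  show "far A (f 0)" "far (f t) B" by fact+
  show "f i < p" if "i \<le> t" for i using off that by auto
  show "far (f i) (f (Suc i))" if "i < t" for i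
  proof (rule far_if_cong)
    show "[int (f (Suc i)) = (int i + 1) * int q + e (Suc i)] (mod int p)"
      using off that by (metis Suc_leI of_nat_Suc add.commute)
    show "[int i * int q + e i - ((int i + 1) * int q + e (Suc i))
        = e i - e (Suc i) - int q + int p] (mod int p)"
      by (simp add: cong_iff_dvd_diff algebra_simps)
  qed (use off that in auto)
  show "far_from_end_clique (f 0)" using off by (intro far_from_end_clique_if_cong) auto
  show "far_from_end_clique (f t)" using off by (intro far_from_end_clique_if_cong) auto
  show "far_from_inner_clique i (f i)" if "1 \<le> i \<and> i \<le> t - 1" for i
    using off that by (intro far_from_inner_clique_if_cong[where e = "e i"]) auto
qed

definition path_step :: "nat \<Rightarrow> nat \<Rightarrow> (nat \<Rightarrow> nat) \<Rightarrow> (nat \<Rightarrow> nat) \<Rightarrow> bool" where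
  "path_step A B f g \<longleftrightarrow>
     path_ok A B f \<and> path_ok A B g \<and> (\<exists>i\<le>t. \<forall>j\<le>t. j \<noteq> i \<longrightarrow> f j = g j)"

abbreviation "path_steps A B \<equiv> (path_step A B)\<^sup>*\<^sup>*"

lemma path_stepI:
  "path_ok A B f \<Longrightarrow> path_ok A B g \<Longrightarrow> i \<le> t \<Longrightarrow> (\<And>j. j \<le> t \<Longrightarrow> j \<noteq> i \<Longrightarrow> f j = g j)
    \<Longrightarrow> path_step A B f g"
  unfolding path_step_def by blast

lemma path_steps_sym: "path_steps A B f g \<Longrightarrow> path_steps A B g f"
proof -
  have "symp (path_step A B)" unfolding path_step_def by (intro sympI) metis
  thus "path_steps A B f g \<Longrightarrow> path_steps A B g f" by (metis sympD symp_rtranclp)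
qed

lemma path_ok_if_path_steps: "path_steps A B f g \<Longrightarrow> path_ok A B f \<Longrightarrow> path_ok A B g"
  by (induction rule: rtranclp_induct) (auto simp: path_step_def)

lemma has_offsets_splice:
  assumes "has_offsets f e d" "has_offsets g e' d'"
    and "\<forall>i<t. 0 \<le> e' (Suc i) - e i \<and> e' (Suc i) - e i \<le> int p - 2 * int q"
  shows "has_offsets (\<lambda>i. if i < m then f i else g i) (\<lambda>i. if i < m then e i else e' i)
    (if t < m then d else d')"
proof -
  have "0 \<le> (if Suc i < m then e else e') (Suc i) - (if i < m then e else e') i \<and>
      (if Suc i < m then e else e') (Suc i) - (if i < m then e else e') i \<le> int p - 2 * int q"
    if "i < t" for i
    using assms that unfolding has_offsets_def
    by (cases "Suc i < m"; cases "i < m") auto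
  thus ?thesis using assms unfolding has_offsets_def by auto
qed

text \<open>Recolour \<open>x\<^sub>0, \<dots>, x\<^sub>t\<close> from \<open>g\<close> to \<open>f\<close> one after the other; the condition on
  \<open>e' (i + 1) - e i\<close> keeps every intermediate colouring proper.\<close>

lemma path_steps_if_offsets:
  assumes off: "has_offsets f e d" "has_offsets g e' d'"
    and cross: "\<forall>i<t. 0 \<le> e' (Suc i) - e i \<and> e' (Suc i) - e i \<le> int p - 2 * int q"
    and ends: "far A (f 0)" "far A (g 0)" "far (f t) B" "far (g t) B"
  shows "path_steps A B g f"
proof -
  define s where "s m = (\<lambda>i. if i < m then f i else g i)" for m
  have ok: "path_ok A B (s m)" for m
    using path_ok_if_offsets[OF has_offsets_splice[OF off cross, of m]] ends
    unfolding s_def by (cases "0 < m"; cases "t < m") auto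
  have "path_steps A B g (s m)" for m
  proof (induction m)
    case 0
    have "s 0 = g" unfolding s_def by simp
    thus ?case by simp
  next
    case (Suc m)
    have "path_step A B (s m) (s (Suc m))"
      by (rule path_stepI[OF ok ok, of "min m t"]) (auto simp: s_def)
    thus ?case using Suc by simp
  qed
  moreover have "path_step A B (s (Suc t)) f"
    using ok path_ok_if_offsets[OF off(1)] ends by (intro path_stepI[of _ _ _ _ 0]) (auto simp: s_def)
  ultimately show ?thesis by (meson rtranclp.rtrancl_into_rtrancl)
qed

lemma cong_int_mod_p [simp]: "[int (n mod p) = y] (mod int p) \<longleftrightarrow> [int n = y] (mod int p)"
  by (simp add: of_nat_mod)

text \<open>The first three are the standard path colourings (tail coloured \<open>0\<close>, head coloured \<open>0\<close>,
  neither); the others occur only while \<open>u\<close> has an auxiliary colour.\<close>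

definition path_from0 :: "nat \<Rightarrow> nat" where
  "path_from0 i = ((i + 1) * q) mod p"

definition path_to0 :: "nat \<Rightarrow> nat" where
  "path_to0 i = (if i < t then (i * q) mod p else q)"

definition path_plain :: "nat \<Rightarrow> nat" where
  "path_plain i = (if i < t then (i * q) mod p else 0)"

definition path_shifted :: "nat \<Rightarrow> nat" where
  "path_shifted i = nat (((int i + 2) * int q - 1) mod int p)"

definition path_wrapped :: "nat \<Rightarrow> nat" where
  "path_wrapped i = (if i = 0 then p - 1 else path_plain i)"

definition path_into :: "nat \<Rightarrow> nat \<Rightarrow> nat" where
  "path_into X i = (if i < t - 1 then (i * q) mod p else if i = t - 1 then p - q - 1 else X)"

lemma has_offsets_from0: "has_offsets path_from0 (\<lambda>i. int q) (int r)"
  unfolding has_offsets_def path_from0_def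
proof (intro conjI allI impI)
  show "[int (((t + 1) * q) mod p) = int r] (mod int p)"
    using t_spec(2) r_lt_q four_q_lt_p by simp
qed (use q_pos four_q_lt_p r_lt_q in \<open>auto simp: algebra_simps\<close>)

lemma has_offsets_to0: "has_offsets path_to0 (\<lambda>i. if i < t then 0 else 2 * int q - int r) (int q)"
  unfolding has_offsets_def path_to0_def
proof (intro conjI allI impI)
  show "[int (if i < t then i * q mod p else q) = int i * int q + (if i < t then 0 else 2 * int q - int r)]
      (mod int p)" if "i \<le> t" for i
    using that by (cases "i < t") (auto intro: cong_by_tq[where a = "-1" and b = 0] simp: algebra_simps)
qed (use q_pos four_q_lt_p r_lt_q two_le_t in auto)

lemma has_offsets_plain: "has_offsets path_plain (\<lambda>i. if i < t then 0 else int q - int r) 0"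
  unfolding has_offsets_def path_plain_def
proof (intro conjI allI impI)
  show "[int (if i < t then i * q mod p else 0) = int i * int q + (if i < t then 0 else int q - int r)]
      (mod int p)" if "i \<le> t" for i
    using that by (cases "i < t") (auto intro: cong_by_tq[where a = "-1" and b = 0] simp: algebra_simps)
qed (use q_pos four_q_lt_p r_lt_q two_le_t in auto)

lemma has_offsets_shifted: "has_offsets path_shifted (\<lambda>i. 2 * int q - 1) (int r + int q - 1)"
  unfolding has_offsets_def path_shifted_def
proof (intro conjI allI impI)
  show "[int (nat (((int i + 2) * int q - 1) mod int p)) = int i * int q + (2 * int q - 1)] (mod int p)"
    for i using four_q_lt_p by (simp add: algebra_simps)
  show "[int (nat (((int t + 2) * int q - 1) mod int p)) = int r + int q - 1] (mod int p)"
    using four_q_lt_p by (auto intro: cong_by_tq[where a = 1 and b = 0] simp: algebra_simps)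
qed (use q_pos four_q_lt_p r_lt_q r_pos in \<open>auto simp: nat_less_iff\<close>)

lemma has_offsets_wrapped:
  "has_offsets path_wrapped (\<lambda>i. if i = 0 then -1 else if i < t then 0 else int q - int r) 0"
  using has_offsets_plain two_le_t q_pos four_q_lt_p r_lt_q
  unfolding has_offsets_def path_wrapped_def
  by (auto intro: cong_by_tq[where a = 0 and b = 1] simp: of_nat_diff)

lemma has_offsets_into:
  assumes "X < p" "[int X = int t * int q + x] (mod int p)" "int q - int r - 1 \<le> x"
    "x \<le> int p - int q - int r - 1" "[int X = d] (mod int p)" "-1 \<le> d" "d \<le> 2 * int q - 1"
  shows "has_offsets (path_into X)
    (\<lambda>i. if i < t - 1 then 0 else if i = t - 1 then int q - int r - 1 else x) d"
  unfolding has_offsets_def path_into_def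
proof (intro conjI allI impI)
  fix i assume "i \<le> t"
  then consider "i < t - 1" | "i = t - 1" | "i = t" by linarith
  thus "[int (if i < t - 1 then i * q mod p else if i = t - 1 then p - q - 1 else X)
    = int i * int q + (if i < t - 1 then 0 else if i = t - 1 then int q - int r - 1 else x)] (mod int p)"
  proof cases
    case 2
    have "int i = int t - 1" using 2 two_le_t by simp
    thus ?thesis using 2 four_q_lt_p
      by (auto intro: cong_by_tq[where a = "-1" and b = 1] simp: of_nat_diff algebra_simps)
  qed (use assms(2) two_le_t in auto)
qed (use assms two_le_t q_pos four_q_lt_p r_lt_q in auto)

lemma path_ends [simp]:
  "path_from0 0 = q" "path_from0 t = r"
  "path_to0 0 = 0" "path_to0 t = q"
  "path_plain 0 = 0" "path_plain t = 0"
  "path_shifted 0 = 2 * q - 1" "path_shifted t = r + q - 1"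
  "path_wrapped 0 = p - 1" "path_wrapped t = 0"
  "path_into X 0 = 0" "path_into X t = X"
proof -
  show "path_shifted t = r + q - 1"
  proof -
    have "int (path_shifted t) = int r + int q - 1"
      using has_offsets_shifted r_lt_q four_q_lt_p q_pos
      by (intro cong_less_imp_eq_int) (auto simp: has_offsets_def)
    thus ?thesis using q_pos by linarith
  qed
  show "path_shifted 0 = 2 * q - 1"
    unfolding path_shifted_def using four_q_lt_p q_pos by (simp add: nat_diff_distrib)
qed (use t_spec two_le_t r_lt_q four_q_lt_p in \<open>auto simp: path_from0_def path_to0_def
  path_plain_def path_wrapped_def path_into_def\<close>)

lemma path_ok_from0: "far A q \<Longrightarrow> far r B \<Longrightarrow> path_ok A B path_from0"
  using path_ok_if_offsets[OF has_offsets_from0] by simp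

lemma path_ok_to0: "far A 0 \<Longrightarrow> far q B \<Longrightarrow> path_ok A B path_to0"
  using path_ok_if_offsets[OF has_offsets_to0] by simp

lemma path_ok_plain: "far A 0 \<Longrightarrow> far 0 B \<Longrightarrow> path_ok A B path_plain"
  using path_ok_if_offsets[OF has_offsets_plain] by simp

lemma path_ok_shifted: "far A (2 * q - 1) \<Longrightarrow> far (r + q - 1) B \<Longrightarrow> path_ok A B path_shifted"
  using path_ok_if_offsets[OF has_offsets_shifted] by simp

lemma path_ok_wrapped: "far A (p - 1) \<Longrightarrow> far 0 B \<Longrightarrow> path_ok A B path_wrapped"
  using path_ok_if_offsets[OF has_offsets_wrapped] by simp

lemma path_ok_into:
  assumes "X \<in> {0, q, 2 * q - 1, p - 1}" "far A 0" "far X B"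
  shows "path_ok A B (path_into X)"
proof -
  note bounds = four_q_lt_p r_lt_q q_pos
  from assms(1) consider "X = 0" | "X = q" | "X = 2 * q - 1" | "X = p - 1" by blast
  hence "\<exists>x d. has_offsets (path_into X) x d"
  proof cases
    case 1
    show ?thesis unfolding 1
      by (intro exI, rule has_offsets_into[where x = "int q - int r" and d = "0"])
        (use bounds in \<open>auto intro: cong_by_tq[where a = "-1" and b = 0] simp: algebra_simps\<close>)
  next
    case 2
    show ?thesis unfolding 2
      by (intro exI, rule has_offsets_into[where x = "2 * int q - int r" and d = "int q"])
        (use bounds in \<open>auto intro: cong_by_tq[where a = "-1" and b = 0] simp: algebra_simps\<close>)
  next
    case 3
    show ?thesis unfolding 3
      by (intro exI, rule has_offsets_into[where x = "3 * int q - int r - 1" and d = "2 * int q - 1"])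
        (use bounds in \<open>auto intro: cong_by_tq[where a = "-1" and b = 0]
          simp: algebra_simps of_nat_diff\<close>)
  next
    case 4
    show ?thesis unfolding 4
      by (intro exI, rule has_offsets_into[where x = "int q - int r - 1" and d = "-1"])
        (use bounds in \<open>auto intro: cong_by_tq[where a = "-1" and b = 1]
          cong_by_tq[where a = 0 and b = 1] simp: algebra_simps of_nat_diff\<close>)
  qed
  then obtain x d where "has_offsets (path_into X) x d" by blast
  thus ?thesis using path_ok_if_offsets assms(2,3) by simp
qed

lemma path_steps_from0_plain:
  "far A q \<Longrightarrow> far A 0 \<Longrightarrow> far r B \<Longrightarrow> far 0 B \<Longrightarrow> path_steps A B path_from0 path_plain"
  by (rule path_steps_if_offsets[OF has_offsets_plain has_offsets_from0])
    (use four_q_lt_p in auto)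

lemma path_steps_from0_shifted:
  "far A q \<Longrightarrow> far A (2 * q - 1) \<Longrightarrow> far r B \<Longrightarrow> far (r + q - 1) B
    \<Longrightarrow> path_steps A B path_from0 path_shifted"
  by (rule path_steps_sym, rule path_steps_if_offsets[OF has_offsets_from0 has_offsets_shifted])
    (use four_q_lt_p q_pos in auto)

lemma path_steps_shifted_wrapped:
  "far A (2 * q - 1) \<Longrightarrow> far A (p - 1) \<Longrightarrow> far (r + q - 1) B \<Longrightarrow> far 0 B
    \<Longrightarrow> path_steps A B path_shifted path_wrapped"
  by (rule path_steps_if_offsets[OF has_offsets_wrapped has_offsets_shifted])
    (use four_q_lt_p q_pos in auto)

lemma path_step_wrapped_plain:
  "far A (p - 1) \<Longrightarrow> far A 0 \<Longrightarrow> far 0 B \<Longrightarrow> path_step A B path_wrapped path_plain"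
  by (rule path_stepI[OF path_ok_wrapped path_ok_plain, where i = 0]) (auto simp: path_wrapped_def)

lemma path_step_to0_plain:
  "far A 0 \<Longrightarrow> far q B \<Longrightarrow> far 0 B \<Longrightarrow> path_step A B path_to0 path_plain"
  by (rule path_stepI[OF path_ok_to0 path_ok_plain, where i = t])
    (auto simp: path_to0_def path_plain_def)

lemma path_step_to0_into:
  "far A 0 \<Longrightarrow> far q B \<Longrightarrow> path_step A B path_to0 (path_into q)"
  by (rule path_stepI[OF path_ok_to0 path_ok_into, where i = "t - 1"])
    (auto simp: path_to0_def path_into_def)

lemma path_step_into:
  "X \<in> {0, q, 2 * q - 1, p - 1} \<Longrightarrow> Y \<in> {0, q, 2 * q - 1, p - 1} \<Longrightarrow> far A 0 \<Longrightarrow> far X B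
    \<Longrightarrow> far Y B \<Longrightarrow> path_step A B (path_into X) (path_into Y)"
  by (rule path_stepI[OF path_ok_into path_ok_into, where i = t]) (auto simp: path_into_def)

lemma path_step_into0_plain:
  "far A 0 \<Longrightarrow> far 0 B \<Longrightarrow> path_step A B (path_into 0) path_plain"
  by (rule path_stepI[OF path_ok_into path_ok_plain, where i = "t - 1"])
    (auto simp: path_into_def path_plain_def)

section \<open>Colourings of \<open>G'\<close> assembled from paths\<close>

definition assemble :: "('v \<Rightarrow> nat) \<Rightarrow> ('v \<Rightarrow> 'v \<Rightarrow> nat \<Rightarrow> nat) \<Rightarrow> 'v gvert \<Rightarrow> nat" where
  "assemble c P x = (case x of Orig v \<Rightarrow> c v | Yv j \<Rightarrow> j | Xv a b i \<Rightarrow> P a b i)"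

lemma assemble_simps [simp]:
  "assemble c P (Orig v) = c v" "assemble c P (Yv j) = j" "assemble c P (Xv a b i) = P a b i"
  unfolding assemble_def by simp_all

definition admissible :: "('v \<Rightarrow> nat) \<Rightarrow> ('v \<Rightarrow> 'v \<Rightarrow> nat \<Rightarrow> nat) \<Rightarrow> bool" where
  "admissible c P \<longleftrightarrow>
     (\<forall>v\<in>V. c v < p) \<and> (\<forall>(a, b)\<in>E. far (c a) (c b) \<and> path_ok (c a) (c b) (P a b))"

lemma pq_col_assemble:
  assumes "admissible c P"
  shows "pq_col p q V E (assemble c P)"
proof -
  have "far (assemble c P x) (assemble c P y)" if "Garc p q V E x y" for x y
    using that unfolding Garc_def
  proof (elim disjE exE conjE)
    fix i j assume "x = Yv i" "y = Yv j" "int q \<le> \<bar>int i - int j\<bar>" "\<bar>int i - int j\<bar> \<le> int p - int q"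
    thus ?thesis unfolding far_def by simp
  qed (use assms in \<open>auto simp: admissible_def path_ok_def far_from_end_clique_def
      far_from_inner_clique_def far_sym\<close>)
  hence "far (assemble c P x) (assemble c P y)" if "Gadj p q V E x y" for x y
    using that far_sym unfolding Gadj_def by blast
  moreover have "assemble c P x < p" if "x \<in> Gvert p q V E" for x
    using that assms unfolding Gvert_def admissible_def path_ok_def by auto
  ultimately show ?thesis unfolding pq_col_def far_def by blast
qed

definition recolour_step :: "('v gvert \<Rightarrow> nat) \<Rightarrow> ('v gvert \<Rightarrow> nat) \<Rightarrow> bool" where
  "recolour_step \<eta> \<eta>' \<longleftrightarrow>
     pq_col p q V E \<eta> \<and> pq_col p q V E \<eta>' \<and> card {x \<in> Gvert p q V E. \<eta> x \<noteq> \<eta>' x} \<le> 1"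

abbreviation "recolour_steps \<equiv> recolour_step\<^sup>*\<^sup>*"

lemma recolour_stepI:
  assumes "pq_col p q V E \<eta>" "pq_col p q V E \<eta>'"
    and "\<And>x. x \<in> Gvert p q V E \<Longrightarrow> x \<noteq> z \<Longrightarrow> \<eta> x = \<eta>' x"
  shows "recolour_step \<eta> \<eta>'"
proof -
  have "card {x \<in> Gvert p q V E. \<eta> x \<noteq> \<eta>' x} \<le> card {z}"
    using assms(3) by (intro card_mono) auto
  thus ?thesis using assms unfolding recolour_step_def by simp
qed

lemma recolour_steps_sym: "recolour_steps \<eta> \<eta>' \<Longrightarrow> recolour_steps \<eta>' \<eta>"
proof -
  have "symp recolour_step"
    unfolding recolour_step_def by (intro sympI) (simp add: eq_commute conj_commute)
  thus "recolour_steps \<eta> \<eta>' \<Longrightarrow> recolour_steps \<eta>' \<eta>" by (metis sympD symp_rtranclp)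
qed

lemma pq_col_if_recolour_steps: "recolour_steps \<eta> \<eta>' \<Longrightarrow> pq_col p q V E \<eta> \<Longrightarrow> pq_col p q V E \<eta>'"
  by (induction rule: rtranclp_induct) (auto simp: recolour_step_def)

lemma reconf_if_recolour_steps:
  assumes "recolour_steps \<eta> \<eta>'" "pq_col p q V E \<eta>"
  shows "reconf p q V E \<eta> \<eta>'"
  using assms
proof (induction rule: rtranclp_induct)
  case base
  show ?case unfolding reconf_def by (intro exI[of _ "[\<eta>]"]) (use base in auto)
next
  case (step \<eta>1 \<eta>2)
  then obtain cs where cs: "cs \<noteq> []" "hd cs = \<eta>" "last cs = \<eta>1" "\<forall>d\<in>set cs. pq_col p q V E d"
    "\<forall>i. Suc i < length cs \<longrightarrow> card {x \<in> Gvert p q V E. (cs ! i) x \<noteq> (cs ! Suc i) x} \<le> 1"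
    unfolding reconf_def by blast
  show ?case unfolding reconf_def
  proof (intro exI[of _ "cs @ [\<eta>2]"] conjI allI impI)
    show "cs @ [\<eta>2] \<noteq> []" "last (cs @ [\<eta>2]) = \<eta>2" "hd (cs @ [\<eta>2]) = \<eta>" using cs by auto
    show "\<forall>d\<in>set (cs @ [\<eta>2]). pq_col p q V E d"
      using cs step.hyps(2) unfolding recolour_step_def by auto
    fix i assume i: "Suc i < length (cs @ [\<eta>2])"
    show "card {x \<in> Gvert p q V E. ((cs @ [\<eta>2]) ! i) x \<noteq> ((cs @ [\<eta>2]) ! Suc i) x} \<le> 1"
    proof (cases "Suc i < length cs")
      case True
      thus ?thesis using cs(5) by (simp add: nth_append)
    next
      case False
      hence "i = length cs - 1" using i by simp
      moreover have "cs ! (length cs - 1) = \<eta>1" using cs(1,3) by (simp add: last_conv_nth)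
      ultimately show ?thesis
        using step.hyps(2) cs(1) unfolding recolour_step_def by (simp add: nth_append)
    qed
  qed
qed

lemma admissible_update_path:
  assumes "admissible c P" "path_ok (c a) (c b) g"
  shows "admissible c (P(a := (P a)(b := g)))"
  unfolding admissible_def
proof (intro conjI ballI)
  show "c v < p" if "v \<in> V" for v using assms(1) that unfolding admissible_def by blast
  fix e assume "e \<in> E"
  then obtain x y where e: "e = (x, y)" "(x, y) \<in> E" by (cases e) auto
  with assms(1) have "far (c x) (c y) \<and> path_ok (c x) (c y) (P x y)"
    unfolding admissible_def by blast
  thus "case e of (x, y) \<Rightarrow> far (c x) (c y) \<and> path_ok (c x) (c y) ((P(a := (P a)(b := g))) x y)"
    using assms(2) e by (cases "x = a \<and> y = b") auto
qed

lemma recolour_steps_path: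
  assumes "path_steps (c a) (c b) f g" "admissible c (P(a := (P a)(b := f)))"
  shows "recolour_steps (assemble c (P(a := (P a)(b := f)))) (assemble c (P(a := (P a)(b := g))))
    \<and> admissible c (P(a := (P a)(b := g)))"
  using assms
proof (induction rule: rtranclp_induct)
  case (step g1 g2)
  hence steps1: "recolour_steps (assemble c (P(a := (P a)(b := f)))) (assemble c (P(a := (P a)(b := g1))))"
    and adm1: "admissible c (P(a := (P a)(b := g1)))" by blast+
  from step.hyps(2) have ok: "path_ok (c a) (c b) g2" unfolding path_step_def by blast
  have adm2: "admissible c (P(a := (P a)(b := g2)))"
    using admissible_update_path[OF adm1 ok] by simp
  from step.hyps(2) obtain i where i: "i \<le> t" "\<forall>j\<le>t. j \<noteq> i \<longrightarrow> g1 j = g2 j"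
    unfolding path_step_def by blast
  have "recolour_step (assemble c (P(a := (P a)(b := g1)))) (assemble c (P(a := (P a)(b := g2))))"
    using i by (intro recolour_stepI[OF pq_col_assemble[OF adm1] pq_col_assemble[OF adm2],
        where z = "Xv a b i"]) (auto simp: Gvert_def split: gvert.split if_split_asm)
  with steps1 adm2 show ?case by (meson rtranclp.rtrancl_into_rtrancl)
qed simp

lemma finite_E: "finite E"
  using finite_V E_subset by (meson finite_SigmaI finite_subset)

lemma recolour_steps_paths:
  assumes adm: "admissible c P" and steps: "\<forall>(a, b)\<in>E. path_steps (c a) (c b) (P a b) (P' a b)"
  shows "recolour_steps (assemble c P) (assemble c P') \<and> admissible c P'"
proof -
  define Q where "Q D = (\<lambda>a b. if (a, b) \<in> D then P' a b else P a b)" for D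
  have ok: "\<forall>(a, b)\<in>E. path_ok (c a) (c b) (P' a b)"
    using adm steps path_ok_if_path_steps unfolding admissible_def by fast
  have "recolour_steps (assemble c P) (assemble c (Q D)) \<and> admissible c (Q D)"
    if "finite D" "D \<subseteq> E" for D
    using that
  proof (induction D rule: finite_induct)
    case empty
    show ?case using adm by (simp add: Q_def)
  next
    case (insert e D)
    obtain a b where e: "e = (a, b)" by (cases e)
    have old: "Q D = (Q D)(a := (Q D a)(b := P a b))" and
      new: "Q (insert e D) = (Q D)(a := (Q D a)(b := P' a b))"
      using insert(2) e unfolding Q_def by (auto intro!: ext)
    have "recolour_steps (assemble c (Q D)) (assemble c (Q (insert e D))) \<and> admissible c (Q (insert e D))"
      using recolour_steps_path[of c a b "P a b" "P' a b" "Q D"] steps insert e old new by auto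
    moreover have "recolour_steps (assemble c P) (assemble c (Q D))"
      using insert.IH insert.prems by simp
    ultimately show ?case by (meson rtranclp_trans)
  qed
  hence QE: "recolour_steps (assemble c P) (assemble c (Q E)) \<and> admissible c (Q E)"
    using finite_E by blast
  have adm': "admissible c P'" using adm ok unfolding admissible_def by auto
  have "recolour_step (assemble c (Q E)) (assemble c P')"
    using QE by (intro recolour_stepI[OF pq_col_assemble pq_col_assemble[OF adm'], where z = "Yv 0"])
      (auto simp: Gvert_def Q_def)
  thus ?thesis using QE adm' by (meson rtranclp.rtrancl_into_rtrancl)
qed

lemma edge_irrefl: "(a, b) \<in> E \<Longrightarrow> a \<noteq> b"
  using irrefl_E unfolding irrefl_def by auto

lemma edge_sym: "(a, b) \<in> E \<Longrightarrow> (b, a) \<in> E"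
  using sym_E unfolding sym_def by blast

lemma recolour_vertex_steps:
  assumes adm: "admissible c P" and "w < p"
    and same: "\<forall>(a, b)\<in>E. a \<noteq> u \<and> b \<noteq> u \<longrightarrow> P' a b = P a b"
    and out: "\<And>b. (u, b) \<in> E \<Longrightarrow>
      path_steps (c u) (c b) (P u b) (P' u b) \<and> far w (c b) \<and> path_ok w (c b) (P' u b)"
    and into: "\<And>a. (a, u) \<in> E \<Longrightarrow>
      path_steps (c a) (c u) (P a u) (P' a u) \<and> far (c a) w \<and> path_ok (c a) w (P' a u)"
  shows "recolour_steps (assemble c P) (assemble (c(u := w)) P') \<and> admissible (c(u := w)) P'"
proof -
  have "\<forall>(a, b)\<in>E. path_steps (c a) (c b) (P a b) (P' a b)"
    using same out into by fastforce
  with adm have paths: "recolour_steps (assemble c P) (assemble c P')" and adm': "admissible c P'"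
    using recolour_steps_paths by blast+
  have adm_w: "admissible (c(u := w)) P'"
    using adm' assms edge_irrefl unfolding admissible_def by fastforce
  have "recolour_step (assemble c P') (assemble (c(u := w)) P')"
    by (rule recolour_stepI[OF pq_col_assemble[OF adm'] pq_col_assemble[OF adm_w], where z = "Orig u"])
      (auto simp: assemble_def split: gvert.split)
  thus ?thesis using paths adm_w by simp
qed

section \<open>Standard colourings\<close>

lemma gam_eq_0_iff: "\<gamma> j = 0 \<longleftrightarrow> j = 0"
  unfolding gam_def using r_pos by auto

lemma gam_0 [simp]: "\<gamma> 0 = 0"
  unfolding gam_def by simp

lemma gam_pos: "0 < j \<Longrightarrow> \<gamma> j = j * q + r"
  unfolding gam_def by simp

lemma gam_le: "j < k \<Longrightarrow> \<gamma> j \<le> p - q"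
proof -
  assume "j < k"
  hence "j * q + q \<le> k * q" by (metis add.commute mult_Suc less_eq_Suc_le mult_le_mono1)
  thus ?thesis using p_eq unfolding gam_def by auto
qed

lemma far_gam_below: "j < k \<Longrightarrow> s + q \<le> \<gamma> j \<Longrightarrow> far (\<gamma> j) s"
  using gam_le[of j] q_pos by (intro farI) auto

lemma far_gam_le_r: "0 < j \<Longrightarrow> j < k \<Longrightarrow> s \<le> r \<Longrightarrow> far (\<gamma> j) s"
proof -
  assume "0 < j" "j < k" "s \<le> r"
  moreover from \<open>0 < j\<close> have "q \<le> j * q" by simp
  ultimately have "s + q \<le> \<gamma> j" using gam_pos[of j] by linarith
  thus "far (\<gamma> j) s" using far_gam_below \<open>j < k\<close> by blast
qed

lemma far_gam_le_q_plus_r: "2 \<le> j \<Longrightarrow> j < k \<Longrightarrow> s \<le> q + r \<Longrightarrow> far (\<gamma> j) s"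
proof -
  assume "2 \<le> j" "j < k" "s \<le> q + r"
  moreover from \<open>2 \<le> j\<close> have "2 * q \<le> j * q" by (intro mult_le_mono1)
  ultimately have "s + q \<le> \<gamma> j" using gam_pos[of j] by linarith
  thus "far (\<gamma> j) s" using far_gam_below \<open>j < k\<close> by blast
qed

lemma far_gam_gam: "i < k \<Longrightarrow> j < k \<Longrightarrow> i \<noteq> j \<Longrightarrow> far (\<gamma> i) (\<gamma> j)"
proof -
  have "far (\<gamma> j) (\<gamma> i)" if "i < j" "j < k" for i j
  proof (rule far_gam_below[OF that(2)])
    have "i * q + q \<le> j * q" using that(1) by (metis add.commute mult_Suc less_eq_Suc_le mult_le_mono1)
    moreover have "\<gamma> i \<le> i * q + r" by (cases "i = 0") (auto simp: gam_pos)
    moreover have "\<gamma> j = j * q + r" using that(1) by (simp add: gam_pos)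
    ultimately show "\<gamma> i + q \<le> \<gamma> j" by linarith
  qed
  thus "i < k \<Longrightarrow> j < k \<Longrightarrow> i \<noteq> j \<Longrightarrow> far (\<gamma> i) (\<gamma> j)"
    using far_sym by (metis linorder_neqE_nat)
qed

lemma far_constants:
  "far 0 q" "far q 0" "far 0 (2 * q - 1)" "far (2 * q - 1) 0"
  "far (q - 1) (2 * q - 1)" "far (2 * q - 1) (q - 1)" "far (q - 1) (p - 1)" "far (p - 1) (q - 1)"
  "far (q + r) (p - 1)" "far (p - 1) (q + r)" "far (q + r) 0" "far 0 (q + r)"
  using four_q_lt_p q_pos r_lt_q unfolding far_def by auto

definition std_paths :: "('v \<Rightarrow> nat) \<Rightarrow> 'v \<Rightarrow> 'v \<Rightarrow> nat \<Rightarrow> nat" where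
  "std_paths c a b = (if c a = 0 then path_from0 else if c b = 0 then path_to0 else path_plain)"

definition std_colouring :: "('v \<Rightarrow> nat) \<Rightarrow> 'v gvert \<Rightarrow> nat" where
  "std_colouring h = assemble (\<gamma> \<circ> h) (std_paths (\<gamma> \<circ> h))"

lemma k_col_edge: "k_col k V E h \<Longrightarrow> (a, b) \<in> E \<Longrightarrow> h a < k \<and> h b < k \<and> h a \<noteq> h b"
  unfolding k_col_def using E_subset by auto

lemma k_col_cong:
  assumes "\<forall>v\<in>V. g' v = g v" "k_col k V E g"
  shows "k_col k V E g'"
proof -
  have "g' a = g a \<and> g' b = g b" if "(a, b) \<in> E" for a b using that assms(1) E_subset by auto
  thus ?thesis using assms unfolding k_col_def by auto
qed

lemma admissible_std: "k_col k V E h \<Longrightarrow> admissible (\<gamma> \<circ> h) (std_paths (\<gamma> \<circ> h))"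
  unfolding admissible_def
proof (intro conjI ballI)
  assume h: "k_col k V E h"
  show "(\<gamma> \<circ> h) v < p" if "v \<in> V" for v
  proof -
    have "h v < k" using h that unfolding k_col_def by blast
    thus ?thesis using gam_le[of "h v"] q_pos four_q_lt_p by simp
  qed
  fix e assume "e \<in> E"
  then obtain a b where e: "e = (a, b)" "(a, b) \<in> E" by (cases e) auto
  hence hab: "h a < k" "h b < k" "h a \<noteq> h b" using k_col_edge[OF h] by auto
  have "path_ok (\<gamma> (h a)) (\<gamma> (h b)) (std_paths (\<gamma> \<circ> h) a b)"
    using hab far_gam_le_r far_sym gam_eq_0_iff far_constants
    by (auto simp: std_paths_def intro!: path_ok_from0 path_ok_to0 path_ok_plain)
  thus "case e of (a, b) \<Rightarrow> far ((\<gamma> \<circ> h) a) ((\<gamma> \<circ> h) b) \<and>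
      path_ok ((\<gamma> \<circ> h) a) ((\<gamma> \<circ> h) b) (std_paths (\<gamma> \<circ> h) a b)"
    using e hab far_gam_gam by simp
qed

lemma all_std_std_colouring: "k_col k V E h \<Longrightarrow> all_std p q E (std_colouring h)"
  unfolding all_std_def std_path_def std_colouring_def
  using k_col_edge gam_eq_0_iff two_le_t
  by (fastforce simp: std_paths_def path_from0_def path_to0_def path_plain_def)

lemma std_colouring_agrees:
  assumes "\<forall>i<p. \<eta> (Yv i) = i" "\<forall>v\<in>V. \<eta> (Orig v) = \<gamma> (h v)" "all_std p q E \<eta>"
    and "x \<in> Gvert p q V E"
  shows "\<eta> x = std_colouring h x"
proof (cases x)
  case (Xv a b i)
  with assms(4) have ab: "(a, b) \<in> E" "i \<le> t" unfolding Gvert_def by auto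
  hence "std_path p q \<eta> a b" "\<eta> (Orig a) = \<gamma> (h a)" "\<eta> (Orig b) = \<gamma> (h b)"
    using assms(2,3) E_subset unfolding all_std_def by auto
  thus ?thesis using Xv ab(2) unfolding std_path_def std_colouring_def
    by (cases "i < t") (auto simp: std_paths_def path_from0_def path_to0_def path_plain_def)
qed (use assms in \<open>auto simp: Gvert_def std_colouring_def\<close>)

lemma out_paths_detour:
  assumes "\<And>s. s \<le> q + r \<Longrightarrow> far s B"
  shows "path_steps 0 B path_from0 path_shifted" "path_ok (q - 1) B path_shifted"
    "path_steps (q - 1) B path_shifted path_wrapped" "path_ok (q + r) B path_wrapped"
    "path_step (q + r) B path_wrapped path_plain" "path_ok (q + r) B path_plain"
  using assms far_constants
  by (auto intro!: path_steps_from0_shifted path_ok_shifted path_steps_shifted_wrapped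
      path_ok_wrapped path_step_wrapped_plain path_ok_plain)

lemma in_paths_detour:
  assumes "\<And>s. s \<le> q + r \<Longrightarrow> far A s"
  shows "path_steps A 0 path_to0 (path_into (2 * q - 1))" "path_ok A (q - 1) (path_into (2 * q - 1))"
    "path_step A (q - 1) (path_into (2 * q - 1)) (path_into (p - 1))"
    "path_ok A (q + r) (path_into (p - 1))"
    "path_steps A (q + r) (path_into (p - 1)) path_plain" "path_ok A (q + r) path_plain"
proof -
  note far = assms[of 0, simplified] far_constants
  have "path_step A 0 path_to0 (path_into q)" "path_step A 0 (path_into q) (path_into (2 * q - 1))"
    using far by (auto intro: path_step_to0_into path_step_into)
  thus "path_steps A 0 path_to0 (path_into (2 * q - 1))"
    by (meson r_into_rtranclp rtranclp.rtrancl_into_rtrancl)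
  have "path_step A (q + r) (path_into (p - 1)) (path_into 0)"
    "path_step A (q + r) (path_into 0) path_plain"
    using far by (auto intro: path_step_into path_step_into0_plain)
  thus "path_steps A (q + r) (path_into (p - 1)) path_plain"
    by (meson r_into_rtranclp rtranclp.rtrancl_into_rtrancl)
qed (use assms far_constants in \<open>auto intro!: path_ok_into path_step_into path_ok_plain\<close>)

section \<open>Recolouring a vertex of colour \<open>0\<close>\<close>

lemma neighbour_of_zero: "k_col k V E h \<Longrightarrow> h u = 0 \<Longrightarrow> (u, b) \<in> E \<Longrightarrow> 0 < h b \<and> h b < k"
  using k_col_edge by fastforce

lemma std_paths_at:
  "c u = 0 \<Longrightarrow> std_paths c u b = path_from0"
  "c a \<noteq> 0 \<Longrightarrow> c u = 0 \<Longrightarrow> std_paths c a u = path_to0"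
  "c a \<noteq> 0 \<Longrightarrow> c b \<noteq> 0 \<Longrightarrow> std_paths c a b = path_plain"
  unfolding std_paths_def by simp_all

lemma recolour_steps_from0_direct:
  assumes adm: "admissible c (std_paths c)" and cu: "c u = 0" and w: "w < p" "far q w"
    and nbr: "\<And>b. (u, b) \<in> E \<Longrightarrow> c b \<noteq> 0 \<and> far w (c b) \<and> (\<forall>s\<le>r. far s (c b))"
  shows "recolour_steps (assemble c (std_paths c)) (assemble (c(u := w)) (std_paths c))
    \<and> admissible (c(u := w)) (std_paths c)"
proof (rule recolour_vertex_steps[OF adm w(1)])
  fix b assume "(u, b) \<in> E"
  thus "path_steps (c u) (c b) (std_paths c u b) (std_paths c u b) \<and> far w (c b) \<and>
      path_ok w (c b) (std_paths c u b)"
    using cu nbr w(2) far_sym by (auto simp: std_paths_at intro!: path_ok_from0)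
next
  fix a assume "(a, u) \<in> E"
  with nbr[OF edge_sym] have "c a \<noteq> 0 \<and> far w (c a) \<and> (\<forall>s\<le>r. far s (c a))" by blast
  thus "path_steps (c a) (c u) (std_paths c a u) (std_paths c a u) \<and> far (c a) w \<and>
      path_ok (c a) w (std_paths c a u)"
    using cu w(2) far_sym by (auto simp: std_paths_at intro!: path_ok_to0)
qed simp

lemma recolour_steps_from0_std:
  assumes adm: "admissible (c(u := w)) (std_paths c)" and cu: "c u = 0"
    and w: "w < p" "w \<noteq> 0" "far q w" "far 0 w"
    and nbr: "\<And>b. (u, b) \<in> E \<Longrightarrow> c b \<noteq> 0 \<and> far w (c b) \<and> (\<forall>s\<le>r. far s (c b))"
  shows "recolour_steps (assemble (c(u := w)) (std_paths c)) (assemble (c(u := w)) (std_paths (c(u := w))))"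
proof -
  have "recolour_steps (assemble (c(u := w)) (std_paths c))
      (assemble ((c(u := w))(u := w)) (std_paths (c(u := w))))"
  proof (rule recolour_vertex_steps[OF adm w(1), THEN conjunct1])
    show "\<forall>(a, b)\<in>E. a \<noteq> u \<and> b \<noteq> u \<longrightarrow> std_paths (c(u := w)) a b = std_paths c a b"
      by (auto simp: std_paths_def)
  next
    fix b assume ub: "(u, b) \<in> E"
    thus "path_steps ((c(u := w)) u) ((c(u := w)) b) (std_paths c u b) (std_paths (c(u := w)) u b) \<and>
        far w ((c(u := w)) b) \<and> path_ok w ((c(u := w)) b) (std_paths (c(u := w)) u b)"
      using cu nbr[OF ub] edge_irrefl[OF ub] w far_sym
      by (auto simp: std_paths_at intro!: path_steps_from0_plain path_ok_plain)
  next
    fix a assume au: "(a, u) \<in> E"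
    with nbr[OF edge_sym] have "c a \<noteq> 0 \<and> far w (c a) \<and> (\<forall>s\<le>r. far s (c a))" by blast
    thus "path_steps ((c(u := w)) a) ((c(u := w)) u) (std_paths c a u) (std_paths (c(u := w)) a u) \<and>
        far ((c(u := w)) a) w \<and> path_ok ((c(u := w)) a) w (std_paths (c(u := w)) a u)"
      using cu edge_irrefl[OF au] w far_sym
      by (auto simp: std_paths_at intro!: r_into_rtranclp path_step_to0_plain path_ok_plain)
  qed
  thus ?thesis by simp
qed

lemma recolour_steps_from0_to_high:
  assumes h: "k_col k V E h" and hu: "h u = 0" and c: "2 \<le> c" "c < k"
    and nbrs: "\<forall>b. (u, b) \<in> E \<longrightarrow> h b \<noteq> c"
  shows "recolour_steps (std_colouring h) (std_colouring (h(u := c)))"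
proof -
  have w: "\<gamma> c < p" "\<gamma> c \<noteq> 0" "far q (\<gamma> c)" "far 0 (\<gamma> c)"
    using gam_le[OF c(2)] q_pos four_q_lt_p far_gam_le_q_plus_r[OF c] far_sym gam_eq_0_iff c
    by auto
  let ?c = "\<gamma> \<circ> h"
  have nbr: "?c b \<noteq> 0 \<and> far (\<gamma> c) (?c b) \<and> (\<forall>s\<le>r. far s (?c b))" if "(u, b) \<in> E" for b
    using neighbour_of_zero[OF h hu that] nbrs that c gam_eq_0_iff far_gam_gam far_gam_le_r far_sym
    by auto
  have cu: "?c u = 0" using hu by simp
  note move_u = recolour_steps_from0_direct[OF admissible_std[OF h] cu w(1,3) nbr]
  note move_paths = recolour_steps_from0_std[OF conjunct2[OF move_u] cu w nbr]
  have "\<gamma> \<circ> h(u := c) = ?c(u := \<gamma> c)" by (simp add: fun_upd_comp)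
  thus ?thesis unfolding std_colouring_def
    by (simp only:) (rule rtranclp_trans[OF conjunct1[OF move_u] move_paths])
qed

text \<open>The paths at \<open>u\<close> while \<open>u\<close> has the auxiliary colour \<open>q - 1\<close>, resp. \<open>q + r = \<gamma> 1\<close>.\<close>

definition detour_low :: "'v \<Rightarrow> ('v \<Rightarrow> 'v \<Rightarrow> nat \<Rightarrow> nat) \<Rightarrow> 'v \<Rightarrow> 'v \<Rightarrow> nat \<Rightarrow> nat" where
  "detour_low u P a b = (if a = u then path_shifted else if b = u then path_into (2 * q - 1) else P a b)"

definition detour_high :: "'v \<Rightarrow> ('v \<Rightarrow> 'v \<Rightarrow> nat \<Rightarrow> nat) \<Rightarrow> 'v \<Rightarrow> 'v \<Rightarrow> nat \<Rightarrow> nat" where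
  "detour_high u P a b = (if a = u then path_wrapped else if b = u then path_into (p - 1) else P a b)"

lemma recolour_steps_from0_to_low:
  assumes adm: "admissible c (std_paths c)" and cu: "c u = 0"
    and nbr: "\<And>b. (u, b) \<in> E \<Longrightarrow> c b \<noteq> 0 \<and> (\<forall>s\<le>q + r. far s (c b))"
  shows "recolour_steps (assemble c (std_paths c)) (assemble (c(u := q - 1)) (detour_low u (std_paths c)))
    \<and> admissible (c(u := q - 1)) (detour_low u (std_paths c))"
proof (rule recolour_vertex_steps)
  fix b assume "(u, b) \<in> E"
  with nbr have "\<And>s. s \<le> q + r \<Longrightarrow> far s (c b)" by blast
  from out_paths_detour[OF this]
  show "path_steps (c u) (c b) (std_paths c u b) (detour_low u (std_paths c) u b)
      \<and> far (q - 1) (c b) \<and> path_ok (q - 1) (c b) (detour_low u (std_paths c) u b)"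
    using cu \<open>\<And>s. s \<le> q + r \<Longrightarrow> far s (c b)\<close> by (simp add: std_paths_at detour_low_def)
next
  fix a assume au: "(a, u) \<in> E"
  with nbr[OF edge_sym] have "\<And>s. s \<le> q + r \<Longrightarrow> far (c a) s" using far_sym by blast
  from in_paths_detour[OF this]
  show "path_steps (c a) (c u) (std_paths c a u) (detour_low u (std_paths c) a u)
      \<and> far (c a) (q - 1) \<and> path_ok (c a) (q - 1) (detour_low u (std_paths c) a u)"
    using cu nbr[OF edge_sym[OF au]] edge_irrefl[OF au] \<open>\<And>s. s \<le> q + r \<Longrightarrow> far (c a) s\<close>
    by (simp add: std_paths_at detour_low_def)
qed (use adm four_q_lt_p in \<open>auto simp: detour_low_def\<close>)

lemma recolour_steps_low_to_high:
  assumes adm: "admissible (c(u := q - 1)) (detour_low u P)"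
    and nbr: "\<And>b. (u, b) \<in> E \<Longrightarrow> c b \<noteq> 0 \<and> (\<forall>s\<le>q + r. far s (c b))"
  shows "recolour_steps (assemble (c(u := q - 1)) (detour_low u P))
      (assemble (c(u := q + r)) (detour_high u P)) \<and> admissible (c(u := q + r)) (detour_high u P)"
proof -
  have "recolour_steps (assemble (c(u := q - 1)) (detour_low u P))
      (assemble ((c(u := q - 1))(u := q + r)) (detour_high u P))
    \<and> admissible ((c(u := q - 1))(u := q + r)) (detour_high u P)"
  proof (rule recolour_vertex_steps[OF adm])
    fix b assume ub: "(u, b) \<in> E"
    with nbr have "\<And>s. s \<le> q + r \<Longrightarrow> far s (c b)" by blast
    from out_paths_detour[OF this]
    show "path_steps ((c(u := q - 1)) u) ((c(u := q - 1)) b) (detour_low u P u b) (detour_high u P u b)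
        \<and> far (q + r) ((c(u := q - 1)) b) \<and> path_ok (q + r) ((c(u := q - 1)) b) (detour_high u P u b)"
      using edge_irrefl[OF ub] \<open>\<And>s. s \<le> q + r \<Longrightarrow> far s (c b)\<close>
      by (simp add: detour_low_def detour_high_def)
  next
    fix a assume au: "(a, u) \<in> E"
    with nbr[OF edge_sym] have "\<And>s. s \<le> q + r \<Longrightarrow> far (c a) s" using far_sym by blast
    from in_paths_detour[OF this]
    show "path_steps ((c(u := q - 1)) a) ((c(u := q - 1)) u) (detour_low u P a u) (detour_high u P a u)
        \<and> far ((c(u := q - 1)) a) (q + r) \<and> path_ok ((c(u := q - 1)) a) (q + r) (detour_high u P a u)"
      using edge_irrefl[OF au] \<open>\<And>s. s \<le> q + r \<Longrightarrow> far (c a) s\<close>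
      by (simp add: detour_low_def detour_high_def)
  qed (use four_q_lt_p r_lt_q in \<open>auto simp: detour_low_def detour_high_def\<close>)
  thus ?thesis by simp
qed

lemma recolour_steps_high_to_std:
  assumes adm: "admissible (c(u := q + r)) (detour_high u (std_paths c))"
    and nbr: "\<And>b. (u, b) \<in> E \<Longrightarrow> c b \<noteq> 0 \<and> (\<forall>s\<le>q + r. far s (c b))"
  shows "recolour_steps (assemble (c(u := q + r)) (detour_high u (std_paths c)))
      (assemble (c(u := q + r)) (std_paths (c(u := q + r))))"
proof -
  let ?c = "c(u := q + r)"
  have "recolour_steps (assemble ?c (detour_high u (std_paths c))) (assemble (?c(u := q + r)) (std_paths ?c))"
  proof (rule recolour_vertex_steps[OF adm, THEN conjunct1])
    show "\<forall>(a, b)\<in>E. a \<noteq> u \<and> b \<noteq> u \<longrightarrow> std_paths ?c a b = detour_high u (std_paths c) a b"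
      by (auto simp: std_paths_def detour_high_def)
  next
    fix b assume ub: "(u, b) \<in> E"
    with nbr have "\<And>s. s \<le> q + r \<Longrightarrow> far s (c b)" by blast
    from out_paths_detour[OF this]
    show "path_steps (?c u) (?c b) (detour_high u (std_paths c) u b) (std_paths ?c u b)
        \<and> far (q + r) (?c b) \<and> path_ok (q + r) (?c b) (std_paths ?c u b)"
      using edge_irrefl[OF ub] nbr[OF ub] q_pos \<open>\<And>s. s \<le> q + r \<Longrightarrow> far s (c b)\<close>
      by (simp add: detour_high_def std_paths_at)
  next
    fix a assume au: "(a, u) \<in> E"
    with nbr[OF edge_sym] have "\<And>s. s \<le> q + r \<Longrightarrow> far (c a) s" using far_sym by blast
    from in_paths_detour[OF this]
    show "path_steps (?c a) (?c u) (detour_high u (std_paths c) a u) (std_paths ?c a u)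
        \<and> far (?c a) (q + r) \<and> path_ok (?c a) (q + r) (std_paths ?c a u)"
      using edge_irrefl[OF au] nbr[OF edge_sym[OF au]] q_pos \<open>\<And>s. s \<le> q + r \<Longrightarrow> far (c a) s\<close>
      by (simp add: detour_high_def std_paths_at)
  qed (use four_q_lt_p r_lt_q in auto)
  thus ?thesis by simp
qed

text \<open>\<open>\<gamma> 1 = q + r\<close> is too close to the colour \<open>q\<close> of \<open>x\<^sub>0\<close> on the paths leaving \<open>u\<close>, so
  \<open>u\<close> moves \<open>0 \<rightarrow> q - 1 \<rightarrow> q + r\<close>, its paths being rerouted before each move.\<close>

lemma recolour_steps_from0_to_one:
  assumes h: "k_col k V E h" and hu: "h u = 0" and nbrs: "\<forall>b. (u, b) \<in> E \<longrightarrow> h b \<noteq> 1"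
  shows "recolour_steps (std_colouring h) (std_colouring (h(u := 1)))"
proof -
  have "(\<gamma> \<circ> h) b \<noteq> 0 \<and> (\<forall>s\<le>q + r. far s ((\<gamma> \<circ> h) b))" if "(u, b) \<in> E" for b
  proof -
    have "2 \<le> h b" "h b < k" using neighbour_of_zero[OF h hu that] nbrs that by force+
    thus ?thesis using far_gam_le_q_plus_r far_sym gam_eq_0_iff by auto
  qed
  note nbr = this
  let ?c = "\<gamma> \<circ> h"
  have cu: "?c u = 0" using hu by simp
  note low = recolour_steps_from0_to_low[OF admissible_std[OF h] cu nbr]
  note high = recolour_steps_low_to_high[OF conjunct2[OF low] nbr]
  note std = recolour_steps_high_to_std[OF conjunct2[OF high] nbr]
  have "\<gamma> \<circ> h(u := 1) = ?c(u := q + r)" by (simp add: fun_upd_comp gam_pos)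
  thus ?thesis unfolding std_colouring_def
    by (simp only:) (rule rtranclp_trans[OF rtranclp_trans[OF conjunct1[OF low] conjunct1[OF high]] std])
qed

lemma recolour_steps_from0:
  assumes h: "k_col k V E h" and h': "k_col k V E (h(u := c))" and u: "u \<in> V"
    and hu: "h u = 0" and c: "c \<noteq> 0"
  shows "recolour_steps (std_colouring h) (std_colouring (h(u := c)))"
proof -
  have "c < k" using h' u unfolding k_col_def by force
  moreover have "\<forall>b. (u, b) \<in> E \<longrightarrow> h b \<noteq> c"
    using neighbour_of_zero[OF h hu] k_col_edge[OF h'] by fastforce
  ultimately show ?thesis
    using c recolour_steps_from0_to_one[OF h hu] recolour_steps_from0_to_high[OF h hu]
    by (cases "c = 1") auto
qed

lemma recolour_step_nonzero:
  assumes h: "k_col k V E h" and h': "k_col k V E (h(u := c))" and "h u \<noteq> 0" "c \<noteq> 0"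
  shows "recolour_step (std_colouring h) (std_colouring (h(u := c)))"
proof -
  have "(\<gamma> \<circ> h(u := c)) v = 0 \<longleftrightarrow> (\<gamma> \<circ> h) v = 0" for v
    using assms gam_eq_0_iff by auto
  hence "std_paths (\<gamma> \<circ> h(u := c)) = std_paths (\<gamma> \<circ> h)"
    by (intro ext) (simp add: std_paths_def)
  thus ?thesis unfolding std_colouring_def
    by (intro recolour_stepI[OF pq_col_assemble[OF admissible_std[OF h]]
        pq_col_assemble[OF admissible_std[OF h']], where z = "Orig u"])
      (auto simp: assemble_def split: gvert.split)
qed

lemma recolour_steps_std_colouring:
  assumes h: "k_col k V E h" and h': "k_col k V E (h(u := c))" and u: "u \<in> V"
  shows "recolour_steps (std_colouring h) (std_colouring (h(u := c)))"
proof -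
  consider "h u = 0" "c = 0" | "h u = 0" "c \<noteq> 0" | "h u \<noteq> 0" "c = 0" | "h u \<noteq> 0" "c \<noteq> 0"
    by blast
  thus ?thesis
  proof cases
    case 1
    thus ?thesis by (simp add: fun_upd_idem)
  next
    case 2
    thus ?thesis using recolour_steps_from0[OF assms] by simp
  next
    case 3
    have "recolour_steps (std_colouring (h(u := c))) (std_colouring ((h(u := c))(u := h u)))"
      by (rule recolour_steps_from0[OF h' _ u]) (use h 3 in auto)
    thus ?thesis using recolour_steps_sym by simp
  next
    case 4
    thus ?thesis using recolour_step_nonzero[OF h h'] by simp
  qed
qed

end

theorem lemma3p4:
  fixes p q :: nat and V :: "'v set" and E :: "('v \<times> 'v) set"
    and h h' :: "'v \<Rightarrow> nat" and u :: 'v and \<eta> :: "'v gvert \<Rightarrow> nat"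
  assumes "0 < q" and "4 * q \<le> p"
    and "1 \<le> rpar p q"
    and "finite V" and "E \<subseteq> V \<times> V" and "sym E" and "irrefl E"
    and "k_col (kpar p q) V E h" and "k_col (kpar p q) V E h'"
    and "u \<in> V" and "{v \<in> V. h v \<noteq> h' v} = {u}"
    and "pq_col p q V E \<eta>"
    and "\<forall>i < p. \<eta> (Yv i) = i"
    and "\<forall>v \<in> V. \<eta> (Orig v) = gam p q (h v)"
    and "all_std p q E \<eta>"
  shows "\<exists>\<eta>'. pq_col p q V E \<eta>' \<and> all_std p q E \<eta>' \<and>
           (\<forall>v \<in> V. \<eta>' (Orig v) = gam p q (h' v)) \<and> reconf p q V E \<eta> \<eta>'"
proof -
  interpret pq_gadget p q V E by unfold_locales (use assms(1-7) in auto)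
  let ?h = "h(u := h' u)"
  have agree: "\<forall>v\<in>V. ?h v = h' v" using assms(11) by auto
  have h': "k_col (kpar p q) V E ?h" by (rule k_col_cong[OF agree assms(9)])
  have "recolour_step \<eta> (std_colouring h)"
    using std_colouring_agrees[OF assms(13-15)]
    by (intro recolour_stepI[OF assms(12) pq_col_assemble[OF admissible_std[OF assms(8)]],
        folded std_colouring_def]) auto
  hence steps: "recolour_steps \<eta> (std_colouring ?h)"
    using recolour_steps_std_colouring[OF assms(8) h' assms(10)] by simp
  show ?thesis
  proof (intro exI conjI)
    show "pq_col p q V E (std_colouring ?h)" by (rule pq_col_if_recolour_steps[OF steps assms(12)])
    show "all_std p q E (std_colouring ?h)" by (rule all_std_std_colouring[OF h'])
    show "\<forall>v\<in>V. std_colouring ?h (Orig v) = gam p q (h' v)"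
      using agree by (simp add: std_colouring_def del: fun_upd_apply)
    show "reconf p q V E \<eta> (std_colouring ?h)" by (rule reconf_if_recolour_steps[OF steps assms(12)])
  qed
qed

end
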